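(* Let $\mathcal{M}=\langle S,\iota,\mathsf{Act},P,\mathsf{Z},\mathsf{obs}\rangle$ be an MDP and $r\colon S\to\mathbb{R}_{\ge0}$. For every trace $\tau\in\mathsf{Z}^+$, $R_r(\tau)=\max_{\sigma\in\Sigma_{\mathrm{DC}}(|\tau|)}\sum_{\pi\in\mathrm{Paths}(\tau)}\Pr^\sigma(\pi\mid\tau)\cdot r(\mathrm{last}(\pi))$.
   Context: An MDP is a tuple $\langle S,\iota,\mathsf{Act},P,\mathsf{Z},\mathsf{obs}\rangle$: finite state set $S$, initial distribution $\iota\in\mathsf{Distr}(S)$, finite action set $\mathsf{Act}$, partial transition function $P\colon S\times\mathsf{Act}\rightharpoonup\mathsf{Distr}(S)$, finite observation set $\mathsf{Z}$, observation function $\mathsf{obs}\colon S\to\mathsf{Distr}(\mathsf{Z})$; $\mathsf{AvAct}(s)=\{\alpha\mid P(s,\alpha)\text{ defined}\}\neq\emptyset$. A finite path is $\pi=s_0a_0\dots a_{n-1}s_n$ with $\iota(s_0)>0$, $P(s_i,a_i)(s_{i+1})>0$; its length $|\pi|=n$ is its number of actions; $\mathrm{last}(\pi)=s_n$. A scheduler $\sigma$ maps each finite path $\pi$ to a distribution on $\mathsf{AvAct}(\mathrm{last}(\pi))$; $\Sigma$ is the set of schedulers; $\Pr^\sigma(\pi)=\iota(s_0)\prod_{i<n}\sigma(s_0a_0\dots s_i)(a_i)P(s_i,a_i)(s_{i+1})$. For a trace $\tau=z_0\dots z_n$ (length $|\tau|$) and path $\pi=s_0\dots s_m$, $\Pr(\tau\mid\pi)=\prod_{i=0}^n\mathsf{obs}(s_i)(z_i)$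 if $m=n$, else $0$; $\mathrm{Paths}(\tau)$ are the paths with as many states as $\tau$ has observations; $\Pr^\sigma(\tau)=\sum_\pi\Pr^\sigma(\pi)\Pr(\tau\mid\pi)$; $\Pr^\sigma(\pi\mid\tau)=\Pr(\tau\mid\pi)\Pr^\sigma(\pi)/\Pr^\sigma(\tau)$ ($0/0=0$). $R_r(\tau)=\sup_{\sigma\in\Sigma}\sum_{\pi\in\mathrm{Paths}(\tau)}\Pr^\sigma(\pi\mid\tau)r(\mathrm{last}(\pi))$. For $k\in\mathbb{N}$, $\Sigma_{\mathrm{DC}}(k)$ is the set of deterministic schedulers (each $\sigma(\pi)$ is Dirac) such that for all finite paths $\pi,\pi'$: if $\mathrm{last}(\pi)=\mathrm{last}(\pi')$ and ($|\pi|=|\pi'|$ or ($|\pi|>k$ and $|\pi'|>k$)), then $\sigma(\pi)=\sigma(\pi')$. *)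

theory Defs
  imports "HOL-Probability.Probability_Mass_Function"
begin

text \<open>An MDP is given by: state type 's (finite), action type 'a (finite),
observation type 'z (finite), initial distribution iota :: 's pmf,
partial transition function P :: 's => 'a => 's pmf option, and
observation function obs :: 's => 'z pmf.\<close>

definition AvAct :: "('s \<Rightarrow> 'a \<Rightarrow> 's pmf option) \<Rightarrow> 's \<Rightarrow> 'a set" where
  "AvAct P s = {a. P s a \<noteq> None}"

text \<open>A finite path s0 a0 s1 ... a(n-1) sn is represented as (s0, [(a0,s1),...,(a(n-1),sn)]).\<close>
type_synonym ('s, 'a) fpath = "'s \<times> ('a \<times> 's) list"

fun pstates :: "('s, 'a) fpath \<Rightarrow> 's list" where
  "pstates (s, xs) = s # map snd xs"

fun plen :: "('s, 'a) fpath \<Rightarrow> nat" where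
  "plen (s, xs) = length xs"

fun plast :: "('s, 'a) fpath \<Rightarrow> 's" where
  "plast (s, xs) = last (s # map snd xs)"

fun is_path :: "'s pmf \<Rightarrow> ('s \<Rightarrow> 'a \<Rightarrow> 's pmf option) \<Rightarrow> ('s, 'a) fpath \<Rightarrow> bool" where
  "is_path iota P (s, xs) \<longleftrightarrow> pmf iota s > 0 \<and>
     (\<forall>i < length xs. case P ((s # map snd xs) ! i) (fst (xs ! i)) of
        None \<Rightarrow> False | Some d \<Rightarrow> pmf d (snd (xs ! i)) > 0)"

definition scheduler :: "'s pmf \<Rightarrow> ('s \<Rightarrow> 'a \<Rightarrow> 's pmf option) \<Rightarrow> (('s, 'a) fpath \<Rightarrow> 'a pmf) \<Rightarrow> bool" where
  "scheduler iota P \<sigma> \<longleftrightarrow> (\<forall>\<pi>. is_path iota P \<pi> \<longrightarrow> set_pmf (\<sigma> \<pi>) \<subseteq> AvAct P (plast \<pi>))"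

fun Pr_path :: "'s pmf \<Rightarrow> ('s \<Rightarrow> 'a \<Rightarrow> 's pmf option) \<Rightarrow> (('s, 'a) fpath \<Rightarrow> 'a pmf) \<Rightarrow> ('s, 'a) fpath \<Rightarrow> real" where
  "Pr_path iota P \<sigma> (s, xs) = pmf iota s *
     (\<Prod>i < length xs. pmf (\<sigma> (s, take i xs)) (fst (xs ! i)) *
        (case P ((s # map snd xs) ! i) (fst (xs ! i)) of None \<Rightarrow> 0 | Some d \<Rightarrow> pmf d (snd (xs ! i))))"

definition Pr_obs :: "('s \<Rightarrow> 'z pmf) \<Rightarrow> 'z list \<Rightarrow> ('s, 'a) fpath \<Rightarrow> real" where
  "Pr_obs obs \<tau> \<pi> = (if length \<tau> = length (pstates \<pi>)
      then (\<Prod>i < length \<tau>. pmf (obs (pstates \<pi> ! i)) (\<tau> ! i)) else 0)"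

definition Paths :: "'s pmf \<Rightarrow> ('s \<Rightarrow> 'a \<Rightarrow> 's pmf option) \<Rightarrow> 'z list \<Rightarrow> ('s, 'a) fpath set" where
  "Paths iota P \<tau> = {\<pi>. is_path iota P \<pi> \<and> length (pstates \<pi>) = length \<tau>}"

text \<open>Pr^sigma(tau): only paths in Paths(tau) contribute (Pr(tau|pi)=0 otherwise).\<close>
definition Pr_trace :: "'s pmf \<Rightarrow> ('s \<Rightarrow> 'a \<Rightarrow> 's pmf option) \<Rightarrow> ('s \<Rightarrow> 'z pmf) \<Rightarrow>
    (('s, 'a) fpath \<Rightarrow> 'a pmf) \<Rightarrow> 'z list \<Rightarrow> real" where
  "Pr_trace iota P obs \<sigma> \<tau> = (\<Sum>\<pi> \<in> Paths iota P \<tau>. Pr_path iota P \<sigma> \<pi> * Pr_obs obs \<tau> \<pi>)"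

text \<open>Pr^sigma(pi | tau), with 0/0 = 0 (Isabelle's division convention).\<close>
definition Pr_cond :: "'s pmf \<Rightarrow> ('s \<Rightarrow> 'a \<Rightarrow> 's pmf option) \<Rightarrow> ('s \<Rightarrow> 'z pmf) \<Rightarrow>
    (('s, 'a) fpath \<Rightarrow> 'a pmf) \<Rightarrow> ('s, 'a) fpath \<Rightarrow> 'z list \<Rightarrow> real" where
  "Pr_cond iota P obs \<sigma> \<pi> \<tau> = Pr_obs obs \<tau> \<pi> * Pr_path iota P \<sigma> \<pi> / Pr_trace iota P obs \<sigma> \<tau>"

definition exp_reward :: "'s pmf \<Rightarrow> ('s \<Rightarrow> 'a \<Rightarrow> 's pmf option) \<Rightarrow> ('s \<Rightarrow> 'z pmf) \<Rightarrow>
    ('s \<Rightarrow> real) \<Rightarrow> (('s, 'a) fpath \<Rightarrow> 'a pmf) \<Rightarrow> 'z list \<Rightarrow> real" where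
  "exp_reward iota P obs r \<sigma> \<tau> = (\<Sum>\<pi> \<in> Paths iota P \<tau>. Pr_cond iota P obs \<sigma> \<pi> \<tau> * r (plast \<pi>))"

definition R_r :: "'s pmf \<Rightarrow> ('s \<Rightarrow> 'a \<Rightarrow> 's pmf option) \<Rightarrow> ('s \<Rightarrow> 'z pmf) \<Rightarrow>
    ('s \<Rightarrow> real) \<Rightarrow> 'z list \<Rightarrow> real" where
  "R_r iota P obs r \<tau> = (SUP \<sigma> \<in> {\<sigma>. scheduler iota P \<sigma>}. exp_reward iota P obs r \<sigma> \<tau>)"

definition deterministic :: "'s pmf \<Rightarrow> ('s \<Rightarrow> 'a \<Rightarrow> 's pmf option) \<Rightarrow> (('s, 'a) fpath \<Rightarrow> 'a pmf) \<Rightarrow> bool" where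
  "deterministic iota P \<sigma> \<longleftrightarrow> (\<forall>\<pi>. is_path iota P \<pi> \<longrightarrow> (\<exists>a. \<sigma> \<pi> = return_pmf a))"

definition Sigma_DC :: "'s pmf \<Rightarrow> ('s \<Rightarrow> 'a \<Rightarrow> 's pmf option) \<Rightarrow> nat \<Rightarrow> (('s, 'a) fpath \<Rightarrow> 'a pmf) set" where
  "Sigma_DC iota P k = {\<sigma>. scheduler iota P \<sigma> \<and> deterministic iota P \<sigma> \<and>
     (\<forall>\<pi> \<pi>'. is_path iota P \<pi> \<and> is_path iota P \<pi>' \<and> plast \<pi> = plast \<pi>' \<and>
        (plen \<pi> = plen \<pi>' \<or> (plen \<pi> > k \<and> plen \<pi>' > k)) \<longrightarrow> \<sigma> \<pi> = \<sigma> \<pi>')}"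

text \<open>Length of a trace z0 ... zn is n (number of observations minus one), matching
the path-length convention.\<close>
definition tlen :: "'z list \<Rightarrow> nat" where
  "tlen \<tau> = length \<tau> - 1"

end

theory Submission
  imports Defs
begin

(*
  Write F(sigma, h) for the sum, over all state/action sequences pi with as many states as tau has
  observations, of Pr^sigma(pi) Pr(tau | pi) h(last pi).  The conditional expected reward of sigma
  is the quotient F(sigma, r) / F(sigma, 1).

  For fixed h, maximising F(sigma, h) is a finite-horizon problem, solved by backward induction
  along tau: choosing the last action greedily for the one-step value V turns the objective for h
  into the objective for V on the trace without its last observation.  So a deterministic scheduler
  depending only on time and current state maximises F(., h) among all schedulers; only its first
  |tau| decisions matter, so it may be frozen after time |tau|, which puts it into Sigma_DC(|tau|).

  Dinkelbach's argument passes from F(., h) to the quotient: if some scheduler had a larger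
  quotient than the best of the finitely many frozen schedulers, a threshold c strictly between
  the two would make F(., r - c) positive for it, hence also for a frozen maximiser of F(., r - c),
  whose quotient would then exceed c.
*)

lemma sum_lists_length_Suc:
  fixes f :: "'b::finite list \<Rightarrow> 'c::comm_monoid_add"
  shows "(\<Sum>ys | length ys = Suc m. f ys) = (\<Sum>xs | length xs = m. \<Sum>x\<in>UNIV. f (xs @ [x]))"
proof -
  have "bij_betw (\<lambda>(xs, x). xs @ [x]) ({xs. length xs = m} \<times> UNIV) {ys. length ys = Suc m}"
  proof (rule bij_betw_imageI)
    show "inj_on (\<lambda>(xs, x). xs @ [x]) ({xs. length xs = m} \<times> UNIV)"
      by (auto simp: inj_on_def)
    show "(\<lambda>(xs, x). xs @ [x]) ` ({xs. length xs = m} \<times> UNIV) = {ys. length ys = Suc m}"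
    proof (intro equalityI subsetI)
      fix ys
      assume "ys \<in> {ys. length ys = Suc m}"
      then have "ys \<noteq> []" "length (butlast ys) = m"
        by auto
      then show "ys \<in> (\<lambda>(xs, x). xs @ [x]) ` ({xs. length xs = m} \<times> UNIV)"
        by (intro image_eqI[of _ _ "(butlast ys, last ys)"]) auto
    qed auto
  qed
  then have "(\<Sum>ys | length ys = Suc m. f ys) = (\<Sum>(xs, x) \<in> {xs. length xs = m} \<times> UNIV. f (xs @ [x]))"
    by (subst sum.reindex_bij_betw[symmetric]) (auto simp: case_prod_unfold)
  then show ?thesis
    by (simp add: sum.cartesian_product)
qed

lemma sum_pmf_mult_le:
  fixes p :: "'a::finite pmf"
  assumes "\<And>a. a \<in> set_pmf p \<Longrightarrow> f a \<le> c"
  shows "(\<Sum>a\<in>UNIV. pmf p a * f a) \<le> c"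
proof -
  have "(\<Sum>a\<in>UNIV. pmf p a * f a) \<le> (\<Sum>a\<in>UNIV. pmf p a * c)"
  proof (rule sum_mono)
    show "pmf p a * f a \<le> pmf p a * c" for a
      by (cases "a \<in> set_pmf p") (auto simp: set_pmf_iff assms intro: mult_left_mono)
  qed
  also have "\<dots> = c"
    by (simp add: sum_distrib_right[symmetric] sum_pmf_eq_1)
  finally show ?thesis .
qed

lemma obtains_argmax_choice:
  fixes Q :: "'s \<Rightarrow> 'a \<Rightarrow> 'b::linorder"
  assumes "\<And>s. finite (A s)" "\<And>s. A s \<noteq> {}"
  obtains g where "\<And>s. g s \<in> A s" "\<And>s b. b \<in> A s \<Longrightarrow> Q s b \<le> Q s (g s)"
proof -
  have "\<forall>s. \<exists>a. a \<in> A s \<and> (\<forall>b\<in>A s. Q s b \<le> Q s a)"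
  proof
    fix s
    obtain a where "a \<in> A s" "Max (Q s ` A s) = Q s a"
      using obtains_MAX[OF assms(1,2)] by blast
    with assms(1) show "\<exists>a. a \<in> A s \<and> (\<forall>b\<in>A s. Q s b \<le> Q s a)"
      by (metis Max_ge finite_imageI imageI)
  qed
  then obtain g where "\<forall>s. g s \<in> A s \<and> (\<forall>b\<in>A s. Q s b \<le> Q s (g s))"
    by (auto dest: choice)
  then show ?thesis
    using that by blast
qed

lemma quotient_maximum_if_linearized_maxima:
  fixes f g :: "'x \<Rightarrow> real"
  assumes "finite S" "S \<noteq> {}" "S \<subseteq> X"
    and nonneg: "\<And>x. x \<in> X \<Longrightarrow> 0 \<le> f x" "\<And>x. x \<in> X \<Longrightarrow> 0 \<le> g x"
    and zero: "\<And>x. x \<in> X \<Longrightarrow> g x = 0 \<Longrightarrow> f x = 0"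
    and linearized: "\<And>c. \<exists>y\<in>S. \<forall>x\<in>X. f x - c * g x \<le> f y - c * g y"
  shows "\<exists>y\<in>S. \<forall>x\<in>X. f x / g x \<le> f y / g y"
proof -
  obtain y where "y \<in> S" and "Max ((\<lambda>x. f x / g x) ` S) = f y / g y"
    using obtains_MAX[OF assms(1,2)] by blast
  then have y_max: "f x / g x \<le> f y / g y" if "x \<in> S" for x
    using Max_ge[OF finite_imageI[OF assms(1)] imageI[OF that, of "\<lambda>x. f x / g x"]] by simp
  have "f x / g x \<le> f y / g y" if "x \<in> X" for x
  proof (rule ccontr)
    assume "\<not> f x / g x \<le> f y / g y"
    then obtain c where "f y / g y < c" "c < f x / g x"
      using dense not_le by blast
    moreover have "0 \<le> f y / g y"
      using \<open>y \<in> S\<close> assms(3) nonneg by auto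
    ultimately have "g x \<noteq> 0"
      by auto
    with nonneg(2)[OF that] have "0 < g x"
      by simp
    with \<open>c < f x / g x\<close> have "0 < f x - c * g x"
      by (simp add: field_simps)
    moreover obtain y' where "y' \<in> S" and "\<forall>x\<in>X. f x - c * g x \<le> f y' - c * g y'"
      using linearized by blast
    ultimately have pos: "0 < f y' - c * g y'"
      using that by fastforce
    have "y' \<in> X"
      using \<open>y' \<in> S\<close> assms(3) by blast
    with pos zero have "g y' \<noteq> 0"
      by force
    with nonneg(2)[OF \<open>y' \<in> X\<close>] have "0 < g y'"
      by simp
    with pos have "c < f y' / g y'"
      by (simp add: field_simps)
    with y_max[OF \<open>y' \<in> S\<close>] \<open>f y / g y < c\<close> show False
      by simp
  qed
  with \<open>y \<in> S\<close> show ?thesis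
    by blast
qed

definition trans_prob :: "('s \<Rightarrow> 'a \<Rightarrow> 's pmf option) \<Rightarrow> 's \<Rightarrow> 'a \<Rightarrow> 's \<Rightarrow> real" where
  "trans_prob P s a s' = (case P s a of None \<Rightarrow> 0 | Some d \<Rightarrow> pmf d s')"

lemma trans_prob_nonneg: "0 \<le> trans_prob P s a s'"
  by (simp add: trans_prob_def split: option.split)

lemmas Pr_path_eq = Pr_path.simps[folded trans_prob_def]

declare Pr_path.simps [simp del]

lemma Pr_path_nonneg: "0 \<le> Pr_path iota P \<sigma> \<pi>"
  by (cases \<pi>) (auto simp: Pr_path_eq trans_prob_nonneg intro!: prod_nonneg mult_nonneg_nonneg)

lemma Pr_obs_nonneg: "0 \<le> Pr_obs obs \<tau> \<pi>"
  by (auto simp: Pr_obs_def intro!: prod_nonneg)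

lemma is_path_if_Pr_path_nonzero:
  assumes "Pr_path iota P \<sigma> (s, xs) \<noteq> 0"
  shows "is_path iota P (s, xs)"
proof -
  have "pmf iota s \<noteq> 0"
    and "\<forall>i < length xs. trans_prob P ((s # map snd xs) ! i) (fst (xs ! i)) (snd (xs ! i)) \<noteq> 0"
    using assms by (auto simp: Pr_path_eq)
  then show ?thesis
    by (auto simp: trans_prob_def pmf_positive_iff set_pmf_iff split: option.splits)
qed

lemma nth_Cons_append_singleton:
  "i \<le> length ys \<Longrightarrow> (y # ys @ [y']) ! i = (y # ys) ! i"
  by (cases i) (auto simp: nth_append)

lemma plast_eq_nth: "plast (s, xs) = (s # map snd xs) ! length xs"
  by (simp add: last_conv_nth)

lemma Pr_path_snoc:
  "Pr_path iota P \<sigma> (s, xs @ [(a, s')]) =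
     Pr_path iota P \<sigma> (s, xs) * pmf (\<sigma> (s, xs)) a * trans_prob P (plast (s, xs)) a s'"
proof -
  let ?ys = "xs @ [(a, s')]"
  have "pmf (\<sigma> (s, take i ?ys)) (fst (?ys ! i)) * trans_prob P ((s # map snd ?ys) ! i) (fst (?ys ! i)) (snd (?ys ! i))
      = pmf (\<sigma> (s, take i xs)) (fst (xs ! i)) * trans_prob P ((s # map snd xs) ! i) (fst (xs ! i)) (snd (xs ! i))"
    if "i < length xs" for i
    using that by (simp add: nth_Cons_append_singleton nth_append)
  then show ?thesis
    unfolding Pr_path_eq length_append_singleton prod.lessThan_Suc plast_eq_nth
    by (simp add: nth_Cons_append_singleton)
qed

lemma Pr_obs_snoc:
  assumes "length \<tau> = Suc (length xs)"
  shows "Pr_obs obs (\<tau> @ [z]) (s, xs @ [(a, s')]) = Pr_obs obs \<tau> (s, xs) * pmf (obs s') z"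
proof -
  have "(\<Prod>i<length xs. pmf (obs ((s # map snd xs @ [s']) ! i)) ((\<tau> @ [z]) ! i))
      = (\<Prod>i<length xs. pmf (obs ((s # map snd xs) ! i)) (\<tau> ! i))"
    using assms by (intro prod.cong) (auto simp: nth_Cons_append_singleton nth_append)
  then show ?thesis
    using assms by (simp add: Pr_obs_def prod.lessThan_Suc nth_Cons_append_singleton nth_append)
qed

lemma Pr_path_cong:
  assumes "\<And>i. i < length xs \<Longrightarrow> \<sigma>1 (s, take i xs) = \<sigma>2 (s, take i xs)"
  shows "Pr_path iota P \<sigma>1 (s, xs) = Pr_path iota P \<sigma>2 (s, xs)"
  using assms by (simp add: Pr_path_eq)

lemma sum_Paths_Pr_path:
  fixes P :: "'s::finite \<Rightarrow> 'a::finite \<Rightarrow> 's pmf option"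
  assumes "\<tau> \<noteq> []"
  shows "(\<Sum>\<pi>\<in>Paths iota P \<tau>. Pr_path iota P \<sigma> \<pi> * g \<pi>) =
    (\<Sum>s\<in>UNIV. \<Sum>xs | length xs = length \<tau> - 1. Pr_path iota P \<sigma> (s, xs) * g (s, xs))"
proof -
  let ?L = "{xs :: ('a \<times> 's) list. length xs = length \<tau> - 1}"
  have "finite ?L"
    using finite_lists_length_eq[of "UNIV :: ('a \<times> 's) set"] by simp
  moreover have "Paths iota P \<tau> \<subseteq> UNIV \<times> ?L"
    using assms by (auto simp: Paths_def)
  moreover have "Pr_path iota P \<sigma> \<pi> = 0" if "\<pi> \<in> UNIV \<times> ?L - Paths iota P \<tau>" for \<pi>
    using that assms is_path_if_Pr_path_nonzero[of iota P \<sigma> "fst \<pi>" "snd \<pi>"]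
    by (cases \<tau>) (auto simp: Paths_def)
  ultimately have "(\<Sum>\<pi>\<in>Paths iota P \<tau>. Pr_path iota P \<sigma> \<pi> * g \<pi>) = (\<Sum>\<pi>\<in>UNIV \<times> ?L. Pr_path iota P \<sigma> \<pi> * g \<pi>)"
    by (intro sum.mono_neutral_left) auto
  then show ?thesis
    by (simp add: sum.cartesian_product)
qed

definition unnormalized_reward :: "'s::finite pmf \<Rightarrow> ('s \<Rightarrow> 'a::finite \<Rightarrow> 's pmf option) \<Rightarrow>
    ('s \<Rightarrow> 'z pmf) \<Rightarrow> (('s, 'a) fpath \<Rightarrow> 'a pmf) \<Rightarrow> 'z list \<Rightarrow> ('s \<Rightarrow> real) \<Rightarrow> real" where
  "unnormalized_reward iota P obs \<sigma> \<tau> h = (\<Sum>s\<in>UNIV. \<Sum>xs | length xs = length \<tau> - 1.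
      Pr_path iota P \<sigma> (s, xs) * Pr_obs obs \<tau> (s, xs) * h (plast (s, xs)))"

lemma unnormalized_reward_nonneg:
  assumes "\<And>s. 0 \<le> h s"
  shows "0 \<le> unnormalized_reward iota P obs \<sigma> \<tau> h"
  unfolding unnormalized_reward_def
  by (intro sum_nonneg mult_nonneg_nonneg Pr_path_nonneg Pr_obs_nonneg assms)

lemma unnormalized_reward_mono:
  assumes "\<And>s. h1 s \<le> h2 s"
  shows "unnormalized_reward iota P obs \<sigma> \<tau> h1 \<le> unnormalized_reward iota P obs \<sigma> \<tau> h2"
  unfolding unnormalized_reward_def
  by (intro sum_mono mult_left_mono mult_nonneg_nonneg Pr_path_nonneg Pr_obs_nonneg assms)

lemma unnormalized_reward_le_const:
  assumes "\<And>s. h s \<le> c"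
  shows "unnormalized_reward iota P obs \<sigma> \<tau> h \<le> c * unnormalized_reward iota P obs \<sigma> \<tau> (\<lambda>_. 1)"
proof -
  have "unnormalized_reward iota P obs \<sigma> \<tau> h \<le> unnormalized_reward iota P obs \<sigma> \<tau> (\<lambda>_. c)"
    using assms by (rule unnormalized_reward_mono)
  also have "\<dots> = c * unnormalized_reward iota P obs \<sigma> \<tau> (\<lambda>_. 1)"
    by (simp add: unnormalized_reward_def sum_distrib_left mult_ac)
  finally show ?thesis .
qed

lemma unnormalized_reward_eq_0:
  assumes "\<And>s. 0 \<le> h s" and "unnormalized_reward iota P obs \<sigma> \<tau> (\<lambda>_. 1) = 0"
  shows "unnormalized_reward iota P obs \<sigma> \<tau> h = 0"
proof -
  have "h s \<le> Max (range h)" for s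
    by (simp add: Max_ge)
  then have "unnormalized_reward iota P obs \<sigma> \<tau> h \<le> 0"
    using unnormalized_reward_le_const[of h "Max (range h)" iota P obs \<sigma> \<tau>] assms(2) by simp
  with unnormalized_reward_nonneg[of h iota P obs \<sigma> \<tau>] assms(1) show ?thesis
    by simp
qed

lemma unnormalized_reward_diff:
  "unnormalized_reward iota P obs \<sigma> \<tau> (\<lambda>s. h s - c)
    = unnormalized_reward iota P obs \<sigma> \<tau> h - c * unnormalized_reward iota P obs \<sigma> \<tau> (\<lambda>_. 1)"
  unfolding unnormalized_reward_def
  by (simp add: right_diff_distrib sum_subtractf sum_distrib_left mult_ac)

lemma unnormalized_reward_cong:
  assumes "\<And>\<pi>. plen \<pi> < length \<tau> - 1 \<Longrightarrow> \<sigma>1 \<pi> = \<sigma>2 \<pi>"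
  shows "unnormalized_reward iota P obs \<sigma>1 \<tau> h = unnormalized_reward iota P obs \<sigma>2 \<tau> h"
  unfolding unnormalized_reward_def
  by (intro sum.cong refl arg_cong2[where f = "(*)"] Pr_path_cong assms) auto

lemma exp_reward_eq_quotient:
  fixes P :: "'s::finite \<Rightarrow> 'a::finite \<Rightarrow> 's pmf option"
  assumes "\<tau> \<noteq> []"
  shows "exp_reward iota P obs r \<sigma> \<tau>
    = unnormalized_reward iota P obs \<sigma> \<tau> r / unnormalized_reward iota P obs \<sigma> \<tau> (\<lambda>_. 1)"
proof -
  have "Pr_trace iota P obs \<sigma> \<tau> = unnormalized_reward iota P obs \<sigma> \<tau> (\<lambda>_. 1)"
    unfolding Pr_trace_def unnormalized_reward_def sum_Paths_Pr_path[OF assms] by simp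
  moreover have "(\<Sum>\<pi>\<in>Paths iota P \<tau>. Pr_cond iota P obs \<sigma> \<pi> \<tau> * r (plast \<pi>))
      = (\<Sum>\<pi>\<in>Paths iota P \<tau>. Pr_path iota P \<sigma> \<pi> * (Pr_obs obs \<tau> \<pi> * r (plast \<pi>))) / Pr_trace iota P obs \<sigma> \<tau>"
    unfolding Pr_cond_def sum_divide_distrib by (simp add: mult_ac)
  ultimately show ?thesis
    unfolding exp_reward_def sum_Paths_Pr_path[OF assms] unnormalized_reward_def by (simp add: mult_ac)
qed

definition step_value :: "('s::finite \<Rightarrow> 'a \<Rightarrow> 's pmf option) \<Rightarrow> ('s \<Rightarrow> 'z pmf) \<Rightarrow> 'z \<Rightarrow>
    ('s \<Rightarrow> real) \<Rightarrow> 's \<Rightarrow> 'a \<Rightarrow> real" where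
  "step_value P obs z h s a = (\<Sum>s'\<in>UNIV. trans_prob P s a s' * pmf (obs s') z * h s')"

lemma unnormalized_reward_snoc:
  assumes "\<tau> \<noteq> []"
  shows "unnormalized_reward iota P obs \<sigma> (\<tau> @ [z]) h = (\<Sum>s\<in>UNIV. \<Sum>xs | length xs = length \<tau> - 1.
      Pr_path iota P \<sigma> (s, xs) * Pr_obs obs \<tau> (s, xs) *
      (\<Sum>a\<in>UNIV. pmf (\<sigma> (s, xs)) a * step_value P obs z h (plast (s, xs)) a))"
proof -
  have last_step: "(\<Sum>y\<in>UNIV. Pr_path iota P \<sigma> (s, xs @ [y]) * Pr_obs obs (\<tau> @ [z]) (s, xs @ [y]) *
          h (plast (s, xs @ [y])))
      = Pr_path iota P \<sigma> (s, xs) * Pr_obs obs \<tau> (s, xs) *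
          (\<Sum>a\<in>UNIV. pmf (\<sigma> (s, xs)) a * step_value P obs z h (plast (s, xs)) a)"
    if "length xs = length \<tau> - 1" for s xs
  proof -
    from that assms have len: "length \<tau> = Suc (length xs)"
      by simp
    have pointwise: "Pr_path iota P \<sigma> (s, xs @ [y]) * Pr_obs obs (\<tau> @ [z]) (s, xs @ [y]) * h (plast (s, xs @ [y]))
        = Pr_path iota P \<sigma> (s, xs) * Pr_obs obs \<tau> (s, xs) *
          (pmf (\<sigma> (s, xs)) (fst y) *
            (trans_prob P (plast (s, xs)) (fst y) (snd y) * pmf (obs (snd y)) z * h (snd y)))"
      (is "?lhs y = ?rhs y") for y
      using Pr_path_snoc[of iota P \<sigma> s xs "fst y" "snd y"] Pr_obs_snoc[OF len, of obs z s "fst y" "snd y"]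
      by (simp add: mult_ac)
    have "(\<Sum>y\<in>UNIV. ?lhs y) = (\<Sum>y\<in>UNIV. ?rhs y)"
      by (intro sum.cong refl pointwise)
    then show ?thesis
      unfolding step_value_def sum_distrib_left sum.cartesian_product UNIV_Times_UNIV case_prod_unfold .
  qed
  from assms have len: "length (\<tau> @ [z]) - 1 = Suc (length \<tau> - 1)"
    by simp
  show ?thesis
    unfolding unnormalized_reward_def len sum_lists_length_Suc
    by (intro sum.cong refl last_step) simp
qed

lemma unnormalized_reward_snoc_le:
  assumes "scheduler iota P \<sigma>" "\<tau> \<noteq> []"
    and "\<And>s a. a \<in> AvAct P s \<Longrightarrow> step_value P obs z h s a \<le> V s"
  shows "unnormalized_reward iota P obs \<sigma> (\<tau> @ [z]) h \<le> unnormalized_reward iota P obs \<sigma> \<tau> V"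
  unfolding unnormalized_reward_snoc[OF assms(2)] unfolding unnormalized_reward_def
proof (intro sum_mono)
  fix s xs
  have "(\<Sum>a\<in>UNIV. pmf (\<sigma> (s, xs)) a * step_value P obs z h (plast (s, xs)) a) \<le> V (plast (s, xs))"
    if "Pr_path iota P \<sigma> (s, xs) \<noteq> 0"
  proof (rule sum_pmf_mult_le)
    have "is_path iota P (s, xs)"
      using that by (rule is_path_if_Pr_path_nonzero)
    with assms(1) have "set_pmf (\<sigma> (s, xs)) \<subseteq> AvAct P (plast (s, xs))"
      by (simp add: scheduler_def del: plast.simps)
    then show "step_value P obs z h (plast (s, xs)) a \<le> V (plast (s, xs))" if "a \<in> set_pmf (\<sigma> (s, xs))" for a
      using that assms(3) by blast
  qed
  then show "Pr_path iota P \<sigma> (s, xs) * Pr_obs obs \<tau> (s, xs) *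
      (\<Sum>a\<in>UNIV. pmf (\<sigma> (s, xs)) a * step_value P obs z h (plast (s, xs)) a)
    \<le> Pr_path iota P \<sigma> (s, xs) * Pr_obs obs \<tau> (s, xs) * V (plast (s, xs))"
    by (cases "Pr_path iota P \<sigma> (s, xs) = 0")
      (auto intro!: mult_left_mono simp: Pr_path_nonneg Pr_obs_nonneg)
qed

definition markov_sched :: "(nat \<Rightarrow> 's \<Rightarrow> 'a) \<Rightarrow> ('s, 'a) fpath \<Rightarrow> 'a pmf" where
  "markov_sched d \<pi> = return_pmf (d (plen \<pi>) (plast \<pi>))"

lemma unnormalized_reward_snoc_markov:
  assumes "\<tau> \<noteq> []"
  shows "unnormalized_reward iota P obs (markov_sched d) (\<tau> @ [z]) h
    = unnormalized_reward iota P obs (markov_sched d) \<tau> (\<lambda>s. step_value P obs z h s (d (length \<tau> - 1) s))"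
  unfolding unnormalized_reward_snoc[OF assms] unfolding unnormalized_reward_def
  by (intro sum.cong refl) (simp add: markov_sched_def pmf_return indicator_def del: plast.simps)

lemma markov_sched_maximizes_unnormalized_reward:
  fixes P :: "'s::finite \<Rightarrow> 'a::finite \<Rightarrow> 's pmf option"
  assumes "\<And>s. AvAct P s \<noteq> {}" "\<tau> \<noteq> []"
  shows "\<exists>d. (\<forall>t s. d t s \<in> AvAct P s) \<and> (\<forall>\<sigma>. scheduler iota P \<sigma> \<longrightarrow>
    unnormalized_reward iota P obs \<sigma> \<tau> h \<le> unnormalized_reward iota P obs (markov_sched d) \<tau> h)"
  using assms(2)
proof (induction \<tau> arbitrary: h rule: rev_nonempty_induct)
  case (single z)
  define d :: "nat \<Rightarrow> 's \<Rightarrow> 'a" where "d t s = (SOME a. a \<in> AvAct P s)" for t s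
  have "d t s \<in> AvAct P s" for t s
    unfolding d_def using assms(1) by (simp add: some_in_eq)
  moreover have "unnormalized_reward iota P obs \<sigma> [z] h = unnormalized_reward iota P obs (markov_sched d) [z] h" for \<sigma>
    by (rule unnormalized_reward_cong) simp
  ultimately show ?case
    by (metis order_refl)
next
  case (snoc z \<tau>)
  let ?Q = "step_value P obs z h"
  obtain g where g: "\<And>s. g s \<in> AvAct P s" and g_max: "\<And>s b. b \<in> AvAct P s \<Longrightarrow> ?Q s b \<le> ?Q s (g s)"
    using assms(1) by (rule obtains_argmax_choice[where A = "AvAct P" and Q = ?Q, OF finite]) blast
  define V where "V = (\<lambda>s. ?Q s (g s))"
  obtain d where d: "\<forall>t s. d t s \<in> AvAct P s"
    and d_max: "\<forall>\<sigma>. scheduler iota P \<sigma> \<longrightarrow>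
      unnormalized_reward iota P obs \<sigma> \<tau> V \<le> unnormalized_reward iota P obs (markov_sched d) \<tau> V"
    using snoc.IH by blast
  define d' where "d' = d(length \<tau> - 1 := g)"
  have "unnormalized_reward iota P obs \<sigma> (\<tau> @ [z]) h \<le> unnormalized_reward iota P obs (markov_sched d') (\<tau> @ [z]) h"
    if "scheduler iota P \<sigma>" for \<sigma>
  proof -
    have "unnormalized_reward iota P obs \<sigma> (\<tau> @ [z]) h \<le> unnormalized_reward iota P obs \<sigma> \<tau> V"
      using that snoc.hyps g_max unfolding V_def by (rule unnormalized_reward_snoc_le)
    also have "\<dots> \<le> unnormalized_reward iota P obs (markov_sched d) \<tau> V"
      using that d_max by blast
    also have "\<dots> = unnormalized_reward iota P obs (markov_sched d') \<tau> V"
      by (rule unnormalized_reward_cong) (simp add: markov_sched_def d'_def)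
    also have "\<dots> = unnormalized_reward iota P obs (markov_sched d') (\<tau> @ [z]) h"
      using snoc.hyps by (simp add: unnormalized_reward_snoc_markov d'_def V_def)
    finally show ?thesis .
  qed
  moreover have "\<forall>t s. d' t s \<in> AvAct P s"
    using d g by (simp add: d'_def)
  ultimately show ?case
    by blast
qed

definition frozen_markov_scheds :: "('s \<Rightarrow> 'a \<Rightarrow> 's pmf option) \<Rightarrow> nat \<Rightarrow> (('s, 'a) fpath \<Rightarrow> 'a pmf) set" where
  "frozen_markov_scheds P k =
    (\<lambda>d. markov_sched (\<lambda>t. d (min t k))) ` ({..k} \<rightarrow>\<^sub>E {f. \<forall>s. f s \<in> AvAct P s})"

lemma markov_sched_min_in_Sigma_DC:
  assumes "\<And>t s. t \<le> k \<Longrightarrow> d t s \<in> AvAct P s"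
  shows "markov_sched (\<lambda>t. d (min t k)) \<in> Sigma_DC iota P k"
  using assms unfolding Sigma_DC_def scheduler_def deterministic_def markov_sched_def
  by (auto simp: min_def simp del: plen.simps plast.simps)

lemma frozen_markov_scheds_subset_Sigma_DC: "frozen_markov_scheds P k \<subseteq> Sigma_DC iota P k"
  unfolding frozen_markov_scheds_def by (auto intro!: markov_sched_min_in_Sigma_DC)

lemma finite_frozen_markov_scheds:
  fixes P :: "'s::finite \<Rightarrow> 'a::finite \<Rightarrow> 's pmf option"
  shows "finite (frozen_markov_scheds P k)"
  unfolding frozen_markov_scheds_def by (intro finite_imageI finite_PiE) auto

lemma frozen_markov_scheds_nonempty:
  assumes "\<And>s. AvAct P s \<noteq> {}"
  shows "frozen_markov_scheds P k \<noteq> {}"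
proof -
  have "(\<lambda>s. SOME a. a \<in> AvAct P s) \<in> {f. \<forall>s. f s \<in> AvAct P s}"
    using assms by (simp add: some_in_eq)
  then show ?thesis
    unfolding frozen_markov_scheds_def by (auto simp: PiE_eq_empty_iff)
qed

lemma frozen_markov_sched_maximizes_unnormalized_reward:
  fixes P :: "'s::finite \<Rightarrow> 'a::finite \<Rightarrow> 's pmf option"
  assumes "\<And>s. AvAct P s \<noteq> {}" "\<tau> \<noteq> []"
  shows "\<exists>\<sigma>\<^sub>0\<in>frozen_markov_scheds P (length \<tau> - 1). \<forall>\<sigma>. scheduler iota P \<sigma> \<longrightarrow>
    unnormalized_reward iota P obs \<sigma> \<tau> h \<le> unnormalized_reward iota P obs \<sigma>\<^sub>0 \<tau> h"
proof -
  let ?n = "length \<tau> - 1"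
  obtain d where d: "\<forall>t s. d t s \<in> AvAct P s" and d_max: "\<forall>\<sigma>. scheduler iota P \<sigma> \<longrightarrow>
      unnormalized_reward iota P obs \<sigma> \<tau> h \<le> unnormalized_reward iota P obs (markov_sched d) \<tau> h"
    using markov_sched_maximizes_unnormalized_reward[OF assms] by blast
  have eq: "unnormalized_reward iota P obs (markov_sched d) \<tau> h
      = unnormalized_reward iota P obs (markov_sched (\<lambda>t. restrict d {..?n} (min t ?n))) \<tau> h"
    by (rule unnormalized_reward_cong) (simp add: markov_sched_def del: plen.simps plast.simps)
  have "restrict d {..?n} \<in> {..?n} \<rightarrow>\<^sub>E {f. \<forall>s. f s \<in> AvAct P s}"
    using d by simp
  then have "markov_sched (\<lambda>t. restrict d {..?n} (min t ?n)) \<in> frozen_markov_scheds P ?n"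
    unfolding frozen_markov_scheds_def by (rule imageI)
  with d_max eq show ?thesis
    by (intro bexI) auto
qed

lemma Sigma_DC_imp_scheduler: "\<sigma> \<in> Sigma_DC iota P k \<Longrightarrow> scheduler iota P \<sigma>"
  by (simp add: Sigma_DC_def)

lemma R_r_eq_if_maximal:
  assumes "scheduler iota P \<sigma>\<^sub>0"
    and "\<And>\<sigma>. scheduler iota P \<sigma> \<Longrightarrow> exp_reward iota P obs r \<sigma> \<tau> \<le> exp_reward iota P obs r \<sigma>\<^sub>0 \<tau>"
  shows "R_r iota P obs r \<tau> = exp_reward iota P obs r \<sigma>\<^sub>0 \<tau>"
  unfolding R_r_def using assms by (intro cSup_eq_maximum) auto

lemma ex_Sigma_DC_maximizing_exp_reward:
  fixes P :: "'s::finite \<Rightarrow> 'a::finite \<Rightarrow> 's pmf option"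
  assumes "\<And>s. AvAct P s \<noteq> {}" "\<And>s. 0 \<le> r s" "\<tau> \<noteq> []"
  shows "\<exists>\<sigma>\<^sub>0\<in>Sigma_DC iota P (tlen \<tau>). \<forall>\<sigma>. scheduler iota P \<sigma> \<longrightarrow>
    exp_reward iota P obs r \<sigma> \<tau> \<le> exp_reward iota P obs r \<sigma>\<^sub>0 \<tau>"
proof -
  let ?G = "unnormalized_reward iota P obs"
  let ?S = "frozen_markov_scheds P (tlen \<tau>)"
  have S_DC: "?S \<subseteq> Sigma_DC iota P (tlen \<tau>)"
    by (rule frozen_markov_scheds_subset_Sigma_DC)
  have "\<exists>\<sigma>\<^sub>0\<in>?S. \<forall>\<sigma>\<in>{\<sigma>. scheduler iota P \<sigma>}. ?G \<sigma> \<tau> r / ?G \<sigma> \<tau> (\<lambda>_. 1) \<le> ?G \<sigma>\<^sub>0 \<tau> r / ?G \<sigma>\<^sub>0 \<tau> (\<lambda>_. 1)"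
  proof (rule quotient_maximum_if_linearized_maxima)
    show "finite ?S" "?S \<noteq> {}"
      using assms(1) by (simp_all add: finite_frozen_markov_scheds frozen_markov_scheds_nonempty)
    show "?S \<subseteq> {\<sigma>. scheduler iota P \<sigma>}"
      using S_DC Sigma_DC_imp_scheduler by blast
    show "0 \<le> ?G \<sigma> \<tau> r" "0 \<le> ?G \<sigma> \<tau> (\<lambda>_. 1)" for \<sigma>
      using assms(2) by (simp_all add: unnormalized_reward_nonneg)
    show "?G \<sigma> \<tau> (\<lambda>_. 1) = 0 \<Longrightarrow> ?G \<sigma> \<tau> r = 0" for \<sigma>
      using assms(2) by (rule unnormalized_reward_eq_0)
    show "\<exists>\<sigma>\<^sub>0\<in>?S. \<forall>\<sigma>\<in>{\<sigma>. scheduler iota P \<sigma>}.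
        ?G \<sigma> \<tau> r - c * ?G \<sigma> \<tau> (\<lambda>_. 1) \<le> ?G \<sigma>\<^sub>0 \<tau> r - c * ?G \<sigma>\<^sub>0 \<tau> (\<lambda>_. 1)" for c
      using frozen_markov_sched_maximizes_unnormalized_reward[OF assms(1,3), of iota obs "\<lambda>s. r s - c"]
      unfolding unnormalized_reward_diff tlen_def by blast
  qed
  then obtain \<sigma>\<^sub>0 where "\<sigma>\<^sub>0 \<in> ?S" and "\<forall>\<sigma>\<in>{\<sigma>. scheduler iota P \<sigma>}.
      ?G \<sigma> \<tau> r / ?G \<sigma> \<tau> (\<lambda>_. 1) \<le> ?G \<sigma>\<^sub>0 \<tau> r / ?G \<sigma>\<^sub>0 \<tau> (\<lambda>_. 1)"
    by blast
  with S_DC show ?thesis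
    by (intro bexI[of _ \<sigma>\<^sub>0]) (auto simp: exp_reward_eq_quotient[OF assms(3)])
qed

theorem lemma8:
  fixes iota :: "('s::finite) pmf"
    and P :: "'s \<Rightarrow> ('a::finite) \<Rightarrow> 's pmf option"
    and obs :: "'s \<Rightarrow> ('z::finite) pmf"
    and r :: "'s \<Rightarrow> real"
    and \<tau> :: "'z list"
  assumes "\<forall>s. AvAct P s \<noteq> {}"
    and "\<forall>s. r s \<ge> 0"
    and "\<tau> \<noteq> []"
  shows "\<exists>\<sigma> \<in> Sigma_DC iota P (tlen \<tau>).
           exp_reward iota P obs r \<sigma> \<tau> = R_r iota P obs r \<tau> \<and>
           (\<forall>\<sigma>' \<in> Sigma_DC iota P (tlen \<tau>). exp_reward iota P obs r \<sigma>' \<tau> \<le> exp_reward iota P obs r \<sigma> \<tau>)"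
proof -
  from assms(1,2) have "\<And>s. AvAct P s \<noteq> {}" and "\<And>s. 0 \<le> r s"
    by simp_all
  then obtain \<sigma>\<^sub>0 where DC: "\<sigma>\<^sub>0 \<in> Sigma_DC iota P (tlen \<tau>)"
    and max: "\<And>\<sigma>. scheduler iota P \<sigma> \<Longrightarrow> exp_reward iota P obs r \<sigma> \<tau> \<le> exp_reward iota P obs r \<sigma>\<^sub>0 \<tau>"
    using ex_Sigma_DC_maximizing_exp_reward[OF _ _ assms(3)] by blast
  have "R_r iota P obs r \<tau> = exp_reward iota P obs r \<sigma>\<^sub>0 \<tau>"
    using Sigma_DC_imp_scheduler[OF DC] max by (rule R_r_eq_if_maximal)
  moreover have "exp_reward iota P obs r \<sigma> \<tau> \<le> exp_reward iota P obs r \<sigma>\<^sub>0 \<tau>"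
    if "\<sigma> \<in> Sigma_DC iota P (tlen \<tau>)" for \<sigma>
    using Sigma_DC_imp_scheduler[OF that] by (rule max)
  ultimately show ?thesis
    using DC by (intro bexI[of _ \<sigma>\<^sub>0] conjI ballI) simp_all
qed

end
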